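(* For all integers $M,N\ge1$, $$d_4^2(M,N)=\beta_4^2(M,N)+\delta_{2|M}\,\frac{(M-2)(N-1)}{M^4N^3},$$ where $\delta_{2|M}=1$ if $M$ is even and $\delta_{2|M}=0$ if $M$ is odd, and $\beta_4^2(M,N)=\delta_4(M,N)+\frac1M(1-\delta_4(M,N))$.
   Context: For integers $M,N,p,r\ge1$, consider triples $(i,a,b)$ with $i\in\mathbb Z_M^r$, $a\in\mathbb Z_M^p$, $b\in\mathbb Z_N^p$, with cyclic conventions $i_{r+1}=i_1$, $b_{p+1}=b_1$. For $x\in\{1,\dots,r\}$, condition $(E_x)$ says that the multisets $\{(i_x+a_y,b_y),(i_{x+1}+a_y,b_{y+1}):y=1,\dots,p\}$ and $\{(i_x+a_y,b_{y+1}),(i_{x+1}+a_y,b_y):y=1,\dots,p\}$ of elements of $\mathbb Z_M\times\mathbb Z_N$ (counted with multiplicity) coincide. Define $d_p^r(M,N)=\frac{1}{M^{p+r}N^p}\#\{(i,a,b):(E_x)\text{ holds for all }x\}$ and $\delta_p(M,N)=\frac{1}{(MN)^p}\#\{(a,b)\in\mathbb Z_M^p\times\mathbb Z_N^p:\{(a_y,b_y)\}_{y=1}^p=\{(a_y,b_{y+1})\}_{y=1}^p\text{ as multisets}\}$. *)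

theory Defs
  imports Main "HOL-Library.Multiset" "HOL-Library.FuncSet" Complex_Main
begin

(* Z_M is represented by {0..<M} with arithmetic mod M; tuples in Z_M^r are
  extensional functions PiE {0..<r} {0..<M}, indexed 0-based, with cyclic
  successor (x+1) mod r. *)

definition cond_E :: "nat \<Rightarrow> nat \<Rightarrow> nat \<Rightarrow> nat \<Rightarrow> (nat \<Rightarrow> nat) \<Rightarrow> (nat \<Rightarrow> nat) \<Rightarrow> (nat \<Rightarrow> nat) \<Rightarrow> nat \<Rightarrow> bool" where
  "cond_E M N p r i a b x \<longleftrightarrow>
     (\<Sum>y<p. {# ((i x + a y) mod M, b y), ((i ((x+1) mod r) + a y) mod M, b ((y+1) mod p)) #})
   = (\<Sum>y<p. {# ((i x + a y) mod M, b ((y+1) mod p)), ((i ((x+1) mod r) + a y) mod M, b y) #})"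

definition d_pr :: "nat \<Rightarrow> nat \<Rightarrow> nat \<Rightarrow> nat \<Rightarrow> real" where
  "d_pr p r M N =
     real (card {(i, a, b). i \<in> {0..<r} \<rightarrow>\<^sub>E {0..<M} \<and> a \<in> {0..<p} \<rightarrow>\<^sub>E {0..<M}
                 \<and> b \<in> {0..<p} \<rightarrow>\<^sub>E {0..<N} \<and> (\<forall>x<r. cond_E M N p r i a b x)})
     / (real M ^ (p + r) * real N ^ p)"

definition delta_p :: "nat \<Rightarrow> nat \<Rightarrow> nat \<Rightarrow> real" where
  "delta_p p M N =
     real (card {(a, b). a \<in> {0..<p} \<rightarrow>\<^sub>E {0..<M} \<and> b \<in> {0..<p} \<rightarrow>\<^sub>E {0..<N}
                 \<and> (\<Sum>y<p. {# (a y, b y) #}) = (\<Sum>y<p. {# (a y, b ((y+1) mod p)) #})})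
     / (real M * real N) ^ p"

definition beta42 :: "nat \<Rightarrow> nat \<Rightarrow> real" where
  "beta42 M N = delta_p 4 M N + (1 / real M) * (1 - delta_p 4 M N)"

end

theory Submission
  imports Defs
begin

(* Translating a by i_1, condition (E_1) becomes X + \<sigma>Y = Y + \<sigma>X for X = {(a_y, b_y)},
   Y = {(a_y, b_(y+1))} and \<sigma>(c, e) = (c + t, e) with t = i_2 - i_1; (E_2) is the same condition.
   For t = 0 it always holds. Otherwise \<sigma> has no fixed points, and X - Y and Y - X are
   \<sigma>-invariant, disjoint and have equal coordinate projections. Having at most four elements,
   each of them must then consist of two \<sigma>-orbits of size two, so either X = Y (the configurations
   counted by \<delta>_4) or 2t = M and (a, b) has the shape b_1 = b_3 \<noteq> b_2 = b_4, a_3 = a_1 + t,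
   a_4 = a_2 + t, a_2 \<notin> {a_1, a_1 + t}; there are M(M - 2)N(N - 1) of the latter. *)

lemma image_mset_diff_eq_self:
  assumes "X + image_mset f Y = Y + image_mset f X"
  shows "image_mset f (X - Y) = X - Y"
proof -
  define I where "I = X \<inter># Y"
  have X: "X = I + (X - Y)" and Y: "Y = I + (Y - X)"
    unfolding I_def by (simp_all add: multiset_eq_iff min_def)
  have swap: "(X - Y) + image_mset f (Y - X) = (Y - X) + image_mset f (X - Y)"
  proof -
    have "I + (X - Y) + (image_mset f I + image_mset f (Y - X))
        = I + (Y - X) + (image_mset f I + image_mset f (X - Y))"
      using assms X Y by (metis image_mset_union)
    then show ?thesis by (simp add: ac_simps)
  qed
  have "X - Y \<subseteq># image_mset f (X - Y)"
  proof (rule mset_subset_eqI)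
    fix z
    have "count (X - Y) z \<le> count (Y - X) z + count (image_mset f (X - Y)) z"
      using arg_cong[OF swap, of "\<lambda>M. count M z"] by simp
    moreover have "count (X - Y) z = 0 \<or> count (Y - X) z = 0" by auto
    ultimately show "count (X - Y) z \<le> count (image_mset f (X - Y)) z" by linarith
  qed
  moreover have "size (image_mset f (X - Y)) = size (X - Y)" by simp
  ultimately show ?thesis
    by (metis mset_subset_size subset_mset.le_less nat_less_le)
qed

lemma mset_eq_if_distinct_members:
  assumes "distinct xs" and "set xs \<subseteq> set_mset B" and "size B \<le> length xs"
  shows "B = mset xs"
proof -
  have "mset xs \<subseteq># B"
    using assms(1,2) by (auto intro!: mset_subset_eqI simp: distinct_count_atmost_1 le_Suc_eq)
  with assms(3) show ?thesis
    by (metis mset_subset_size size_mset subset_mset.le_less not_le)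
qed

lemma invariant_mset_preimage:
  assumes "image_mset f A = A" and "z \<in># A"
  obtains w where "w \<in># A" and "f w = z"
  using assms by (metis imageE set_image_mset)

lemma invariant_mset_image_mem:
  assumes "image_mset f A = A" and "z \<in># A"
  shows "f z \<in># A"
  by (metis assms image_eqI set_image_mset)

lemma apfst_invariant_preimage:
  assumes "image_mset (apfst s) A = A" and "(c, e) \<in># A"
  obtains c0 where "(c0, e) \<in># A" and "s c0 = c"
proof -
  obtain w where "w \<in># A" "apfst s w = (c, e)"
    using invariant_mset_preimage[OF assms] .
  then show thesis using that by (cases w) auto
qed

lemma apfst_invariant_image_mem:
  assumes "image_mset (apfst s) A = A" and "(c, e) \<in># A"
  shows "(s c, e) \<in># A"
  using invariant_mset_image_mem[OF assms] by simp

lemma apfst_invariant_diff_shape: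
  fixes s :: "'a \<Rightarrow> 'a" and A B :: "('a \<times> 'b) multiset"
  assumes no_fix: "\<And>x. s x \<noteq> x"
    and disjoint: "\<And>z. z \<in># A \<Longrightarrow> z \<notin># B"
    and inv_A: "image_mset (apfst s) A = A" and inv_B: "image_mset (apfst s) B = B"
    and fst_eq: "image_mset fst A = image_mset fst B"
    and snd_eq: "image_mset snd A = image_mset snd B"
    and size_A: "size A \<le> 4" and size_B: "size B \<le> 4"
    and mem: "(c, e) \<in># A"
  obtains c2 e4 e3 where
    "A = {#(c, e), (s c, e), (c2, e4), (s c2, e4)#}"
    "B = {#(c2, e), (s c2, e), (c, e3), (s c, e3)#}"
    "s (s c) = c" "s (s c2) = c2" "e \<noteq> e3" "e \<noteq> e4" "c \<notin> {c2, s c2}" "s c \<notin> {c2, s c2}"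
proof -
  obtain c0 where c0: "(c0, e) \<in># A" "s c0 = c"
    using apfst_invariant_preimage[OF inv_A mem] .
  have "e \<in># image_mset snd B" using snd_eq mem by (metis image_eqI set_image_mset snd_conv)
  then obtain c2 where c2: "(c2, e) \<in># B" by auto
  obtain c2' where c2': "(c2', e) \<in># B" "s c2' = c2"
    using apfst_invariant_preimage[OF inv_B c2] .
  have "c \<in># image_mset fst B" using fst_eq mem by (metis image_eqI set_image_mset fst_conv)
  then obtain e3 where e3: "(c, e3) \<in># B" by auto
  obtain c' where c': "(c', e3) \<in># B" "s c' = c"
    using apfst_invariant_preimage[OF inv_B e3] .
  have "c2 \<in># image_mset fst A" using fst_eq c2 by (metis image_eqI set_image_mset fst_conv)
  then obtain e4 where e4: "(c2, e4) \<in># A" by auto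
  obtain c2'' where c2'': "(c2'', e4) \<in># A" "s c2'' = c2"
    using apfst_invariant_preimage[OF inv_A e4] .
  have "e \<noteq> e3" "e \<noteq> e4" using disjoint mem e3 e4 c2 by auto
  have "c2' \<noteq> c2" "c' \<noteq> c" "c0 \<noteq> c" "c2'' \<noteq> c2"
    using no_fix c2'(2) c'(2) c0(2) c2''(2) by metis+
  have "B = mset [(c2, e), (c2', e), (c, e3), (c', e3)]"
    by (rule mset_eq_if_distinct_members)
      (use \<open>e \<noteq> e3\<close> c2 c2' e3 c' size_B \<open>c2' \<noteq> c2\<close> \<open>c' \<noteq> c\<close> in auto)
  then have B: "B = {#(c2, e), (c2', e), (c, e3), (c', e3)#}" by simp
  have "A = mset [(c, e), (c0, e), (c2, e4), (c2'', e4)]"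
    by (rule mset_eq_if_distinct_members)
      (use \<open>e \<noteq> e4\<close> mem c0 e4 c2'' size_A \<open>c0 \<noteq> c\<close> \<open>c2'' \<noteq> c2\<close> in auto)
  then have A: "A = {#(c, e), (c0, e), (c2, e4), (c2'', e4)#}" by simp
  have sc0: "s c = c0" using apfst_invariant_image_mem[OF inv_A mem] A no_fix[of c] \<open>e \<noteq> e4\<close> by auto
  have sc': "s c = c'" using apfst_invariant_image_mem[OF inv_B e3] B no_fix[of c] \<open>e \<noteq> e3\<close> by auto
  have sc2: "s c2 = c2'" using apfst_invariant_image_mem[OF inv_B c2] B no_fix[of c2] \<open>e \<noteq> e3\<close> by auto
  have sc2'': "s c2 = c2''" using apfst_invariant_image_mem[OF inv_A e4] A no_fix[of c2] \<open>e \<noteq> e4\<close> by auto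
  have "c \<notin> {c2, c2'}" "c0 \<notin> {c2, c2'}" using disjoint mem c0(1) c2 c2' by auto
  then show thesis
    using A B c'(2) c2'(2) \<open>e \<noteq> e3\<close> \<open>e \<noteq> e4\<close>
    by (intro that[of c2 e4 e3]) (simp_all flip: sc0 sc' sc2 sc2'')
qed

lemma four_cycle_of_diff_shape:
  fixes s :: "'a \<Rightarrow> 'a"
  assumes no_fix: "\<And>x. s x \<noteq> x"
    and X: "{#(a0, b0), (a1, b1), (a2, b2), (a3, b3)#} = {#(c, e), (s c, e), (c2, e4), (s c2, e4)#}"
    and Y: "{#(a0, b1), (a1, b2), (a2, b3), (a3, b0)#} = {#(c2, e), (s c2, e), (c, e3), (s c, e3)#}"
    and involutive: "s (s c) = c" "s (s c2) = c2"
    and "e \<noteq> e3" "e \<noteq> e4" "c \<notin> {c2, s c2}" "s c \<notin> {c2, s c2}"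
  shows "b0 = b2 \<and> b1 = b3 \<and> b0 \<noteq> b1 \<and> a2 = s a0 \<and> a3 = s a1 \<and> s (s a0) = a0
    \<and> a1 \<noteq> a0 \<and> a1 \<noteq> s a0"
proof -
  have "c \<noteq> s c" "c2 \<noteq> s c2" using no_fix by metis+
  then have "distinct [(c, e), (s c, e), (c2, e4), (s c2, e4)]" using assms(6-9) by auto
  moreover have "mset [(a0, b0), (a1, b1), (a2, b2), (a3, b3)] = mset [(c, e), (s c, e), (c2, e4), (s c2, e4)]"
    using X by simp
  ultimately have distinct: "distinct [(a0, b0), (a1, b1), (a2, b2), (a3, b3)]"
    using mset_eq_imp_distinct_iff by blast
  have pair_cases: "((u = c \<or> u = s c) \<and> v = e \<and> w = e3) \<or> ((u = c2 \<or> u = s c2) \<and> v = e4 \<and> w = e)"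
    if "(u, v) \<in># {#(a0, b0), (a1, b1), (a2, b2), (a3, b3)#}"
      and "(u, w) \<in># {#(a0, b1), (a1, b2), (a2, b3), (a3, b0)#}" for u v w
    using that \<open>c \<noteq> s c\<close> \<open>c2 \<noteq> s c2\<close> assms(6-9) unfolding X Y by auto
  have "((a0 = c \<or> a0 = s c) \<and> b0 = e \<and> b1 = e3) \<or> ((a0 = c2 \<or> a0 = s c2) \<and> b0 = e4 \<and> b1 = e)"
    "((a1 = c \<or> a1 = s c) \<and> b1 = e \<and> b2 = e3) \<or> ((a1 = c2 \<or> a1 = s c2) \<and> b1 = e4 \<and> b2 = e)"
    "((a2 = c \<or> a2 = s c) \<and> b2 = e \<and> b3 = e3) \<or> ((a2 = c2 \<or> a2 = s c2) \<and> b2 = e4 \<and> b3 = e)"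
    "((a3 = c \<or> a3 = s c) \<and> b3 = e \<and> b0 = e3) \<or> ((a3 = c2 \<or> a3 = s c2) \<and> b3 = e4 \<and> b0 = e)"
    by (rule pair_cases; simp)+
  then show ?thesis
    using distinct involutive \<open>c \<noteq> s c\<close> \<open>c2 \<noteq> s c2\<close> assms(6-9) by auto
qed

lemma apfst_balance_four_cycle:
  fixes s :: "'a \<Rightarrow> 'a" and a0 a1 a2 a3 :: 'a and b0 b1 b2 b3 :: 'b
  defines "X \<equiv> {#(a0, b0), (a1, b1), (a2, b2), (a3, b3)#}"
    and "Y \<equiv> {#(a0, b1), (a1, b2), (a2, b3), (a3, b0)#}"
  assumes no_fix: "\<And>x. s x \<noteq> x"
    and balance: "X + image_mset (apfst s) Y = Y + image_mset (apfst s) X"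
    and "X \<noteq> Y"
  shows "b0 = b2 \<and> b1 = b3 \<and> b0 \<noteq> b1 \<and> a2 = s a0 \<and> a3 = s a1 \<and> s (s a0) = a0
    \<and> a1 \<noteq> a0 \<and> a1 \<noteq> s a0"
proof -
  define A where "A = X - Y"
  define B where "B = Y - X"
  define I where "I = X \<inter># Y"
  have X_split: "X = I + A" and Y_split: "Y = I + B"
    unfolding I_def A_def B_def by (simp_all add: multiset_eq_iff min_def)
  have inv_A: "image_mset (apfst s) A = A"
    unfolding A_def using balance by (rule image_mset_diff_eq_self)
  have inv_B: "image_mset (apfst s) B = B"
    unfolding B_def using balance[symmetric] by (rule image_mset_diff_eq_self)
  have disjoint: "\<And>z. z \<in># A \<Longrightarrow> z \<notin># B" unfolding A_def B_def by (simp add: in_diff_count)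
  have "image_mset fst X = image_mset fst Y" "image_mset snd X = image_mset snd Y"
    unfolding X_def Y_def by (simp_all add: add_mset_commute)
  then have fst_eq: "image_mset fst A = image_mset fst B"
    and snd_eq: "image_mset snd A = image_mset snd B"
    unfolding X_split Y_split by simp_all
  have size_X: "size X = 4" "size Y = 4" unfolding X_def Y_def by simp_all
  then have size_A: "size A \<le> 4" "size B \<le> 4" unfolding X_split Y_split by simp_all
  have "A \<noteq> {#}"
    using \<open>X \<noteq> Y\<close> size_X unfolding X_split Y_split by auto
  then obtain c e where mem: "(c, e) \<in># A" by (metis multiset_nonemptyE surj_pair)
  obtain c2 e3 e4 where A: "A = {#(c, e), (s c, e), (c2, e4), (s c2, e4)#}"
    and B: "B = {#(c2, e), (s c2, e), (c, e3), (s c, e3)#}"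
    and rest: "s (s c) = c" "s (s c2) = c2" "e \<noteq> e3" "e \<noteq> e4" "c \<notin> {c2, s c2}" "s c \<notin> {c2, s c2}"
    by (rule apfst_invariant_diff_shape[OF no_fix disjoint inv_A inv_B fst_eq snd_eq size_A mem])
  have "I = {#}" using size_X X_split A by simp
  then have "X = A" "Y = B" using X_split Y_split by simp_all
  then show ?thesis
    using four_cycle_of_diff_shape[OF no_fix _ _ rest] A B unfolding X_def Y_def by blast
qed

definition pairs4 :: "(nat \<Rightarrow> 'a) \<Rightarrow> (nat \<Rightarrow> 'b) \<Rightarrow> ('a \<times> 'b) multiset" where
  "pairs4 a b = {#(a 0, b 0), (a 1, b 1), (a 2, b 2), (a 3, b 3)#}"

definition rotated_pairs4 :: "(nat \<Rightarrow> 'a) \<Rightarrow> (nat \<Rightarrow> 'b) \<Rightarrow> ('a \<times> 'b) multiset" where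
  "rotated_pairs4 a b = {#(a 0, b 1), (a 1, b 2), (a 2, b 3), (a 3, b 0)#}"

(* Condition (E_1) after translating the a-coordinates by i_1, with t = i_2 - i_1. *)
definition shift_balanced :: "nat \<Rightarrow> nat \<Rightarrow> (nat \<Rightarrow> nat) \<Rightarrow> (nat \<Rightarrow> nat) \<Rightarrow> bool" where
  "shift_balanced M t a b \<longleftrightarrow>
     pairs4 a b + image_mset (apfst (\<lambda>x. (t + x) mod M)) (rotated_pairs4 a b)
   = rotated_pairs4 a b + image_mset (apfst (\<lambda>x. (t + x) mod M)) (pairs4 a b)"

definition antipodal_pattern :: "nat \<Rightarrow> nat \<Rightarrow> (nat \<Rightarrow> nat) \<Rightarrow> (nat \<Rightarrow> nat) \<Rightarrow> bool" where
  "antipodal_pattern M t a b \<longleftrightarrow> 2 * t = M \<and> b 0 = b 2 \<and> b 1 = b 3 \<and> b 0 \<noteq> b 1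
     \<and> a 2 = (t + a 0) mod M \<and> a 3 = (t + a 1) mod M \<and> a 1 \<noteq> a 0 \<and> a 1 \<noteq> (t + a 0) mod M"

lemma sum_mset_lessThan_4: "(\<Sum>y<(4::nat). f y) = f 0 + f 1 + f 2 + (f 3 :: 'a multiset)"
  by (simp add: eval_nat_numeral ac_simps)

lemma Suc_mod_4:
  "((0::nat) + 1) mod 4 = 1" "((1::nat) + 1) mod 4 = 2" "((2::nat) + 1) mod 4 = 3" "((3::nat) + 1) mod 4 = 0"
  by simp_all

lemma add_mod_neq_self:
  fixes t M x :: nat
  assumes "0 < t" and "t < M"
  shows "(t + x) mod M \<noteq> x"
proof
  assume fixed: "(t + x) mod M = x"
  then have "x < M" using assms by (metis mod_less_divisor gr_zeroI not_less0)
  then have "(t + x) mod M = (if t + x < M then t + x else t + x - M)"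
    using assms by (simp add: mod_if)
  with fixed assms \<open>x < M\<close> show False by (auto split: if_splits)
qed

lemma add_mod_twice: "(t + (t + x) mod M) mod M = (2 * t + x) mod (M::nat)"
  by (simp add: mod_add_right_eq add.assoc[symmetric] mult_2)

lemma add_mod_involutive_iff:
  fixes t M x :: nat
  assumes "0 < t" and "t < M" and "x < M"
  shows "(t + (t + x) mod M) mod M = x \<longleftrightarrow> 2 * t = M"
proof
  assume "(t + (t + x) mod M) mod M = x"
  then have "(2 * t + x) mod M = x mod M" using \<open>x < M\<close> by (simp add: add_mod_twice)
  then have "M dvd 2 * t" by (simp add: mod_eq_dvd_iff_nat)
  then obtain k where k: "2 * t = M * k" by blast
  with assms have "M * k < M * 2" and "k \<noteq> 0"
    by (linarith, metis mult_0_right not_gr0 mult_pos_pos zero_less_numeral)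
  then have "k = 1" by simp
  with k show "2 * t = M" by simp
next
  assume "2 * t = M"
  then show "(t + (t + x) mod M) mod M = x" using \<open>x < M\<close> by (simp add: add_mod_twice)
qed

lemma shift_balanced_iff:
  fixes M t :: nat
  assumes t: "0 < t" "t < M" and a: "a 0 < M" "a 1 < M" "a 2 < M" "a 3 < M"
  shows "shift_balanced M t a b \<longleftrightarrow> pairs4 a b = rotated_pairs4 a b \<or> antipodal_pattern M t a b"
proof (cases "pairs4 a b = rotated_pairs4 a b")
  case False
  let ?s = "\<lambda>x. (t + x) mod M"
  have no_fix: "\<And>x. ?s x \<noteq> x" using add_mod_neq_self[OF t] .
  show ?thesis
  proof
    assume "shift_balanced M t a b"
    then have "b 0 = b 2 \<and> b 1 = b 3 \<and> b 0 \<noteq> b 1 \<and> a 2 = ?s (a 0) \<and> a 3 = ?s (a 1)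
        \<and> ?s (?s (a 0)) = a 0 \<and> a 1 \<noteq> a 0 \<and> a 1 \<noteq> ?s (a 0)"
      using False no_fix unfolding shift_balanced_def pairs4_def rotated_pairs4_def
      by (intro apfst_balance_four_cycle) auto
    then show "pairs4 a b = rotated_pairs4 a b \<or> antipodal_pattern M t a b"
      using add_mod_involutive_iff[OF t a(1)] unfolding antipodal_pattern_def by auto
  next
    assume "pairs4 a b = rotated_pairs4 a b \<or> antipodal_pattern M t a b"
    then have pattern: "antipodal_pattern M t a b" using False by blast
    then have "?s (a 2) = a 0" "?s (a 3) = a 1"
      using add_mod_involutive_iff[OF t] a unfolding antipodal_pattern_def by auto
    then show "shift_balanced M t a b"
      using pattern unfolding shift_balanced_def pairs4_def rotated_pairs4_def antipodal_pattern_def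
      by (simp add: add_mset_commute)
  qed
qed (simp add: shift_balanced_def)

lemma antipodal_pattern_not_cyclic:
  assumes "a 1 < M" and "antipodal_pattern M t a b"
  shows "pairs4 a b \<noteq> rotated_pairs4 a b"
proof
  assume eq: "pairs4 a b = rotated_pairs4 a b"
  have "(a 0, b 0) \<in># rotated_pairs4 a b" unfolding eq[symmetric] pairs4_def by simp
  moreover have "a 3 \<noteq> a 0"
  proof
    assume "a 3 = a 0"
    have "(t + a 3) mod M = (2 * t + a 1) mod M"
      using assms(2) add_mod_twice unfolding antipodal_pattern_def by simp
    also have "\<dots> = a 1" using assms unfolding antipodal_pattern_def by simp
    finally show False using \<open>a 3 = a 0\<close> assms(2) unfolding antipodal_pattern_def by simp
  qed
  ultimately show False using assms(2) unfolding rotated_pairs4_def antipodal_pattern_def by auto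
qed

definition configs4 :: "nat \<Rightarrow> nat \<Rightarrow> ((nat \<Rightarrow> nat) \<times> (nat \<Rightarrow> nat)) set" where
  "configs4 M N = ({0..<4} \<rightarrow>\<^sub>E {0..<M}) \<times> ({0..<4} \<rightarrow>\<^sub>E {0..<N})"

definition shift_balanced_configs :: "nat \<Rightarrow> nat \<Rightarrow> nat \<Rightarrow> ((nat \<Rightarrow> nat) \<times> (nat \<Rightarrow> nat)) set" where
  "shift_balanced_configs M N t = {(a, b) \<in> configs4 M N. shift_balanced M t a b}"

definition cyclic_configs :: "nat \<Rightarrow> nat \<Rightarrow> ((nat \<Rightarrow> nat) \<times> (nat \<Rightarrow> nat)) set" where
  "cyclic_configs M N = {(a, b) \<in> configs4 M N. pairs4 a b = rotated_pairs4 a b}"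

definition antipodal_configs :: "nat \<Rightarrow> nat \<Rightarrow> nat \<Rightarrow> ((nat \<Rightarrow> nat) \<times> (nat \<Rightarrow> nat)) set" where
  "antipodal_configs M N t = {(a, b) \<in> configs4 M N. antipodal_pattern M t a b}"

lemma finite_configs4: "finite (configs4 M N)"
  unfolding configs4_def by (simp add: finite_PiE)

lemma card_configs4: "card (configs4 M N) = M ^ 4 * N ^ 4"
  unfolding configs4_def by (simp add: card_cartesian_product card_PiE)

lemma configs4_lt:
  assumes "(a, b) \<in> configs4 M N"
  shows "a 0 < M" "a 1 < M" "a 2 < M" "a 3 < M"
  using assms unfolding configs4_def by auto

lemma shift_balanced_configs_0: "shift_balanced_configs M N 0 = configs4 M N"
  using configs4_lt
  by (auto simp: shift_balanced_configs_def shift_balanced_def pairs4_def rotated_pairs4_def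
      add_mset_commute)

lemma card_shift_balanced_configs:
  assumes "0 < t" and "t < M"
  shows "card (shift_balanced_configs M N t) = card (cyclic_configs M N) + card (antipodal_configs M N t)"
proof -
  have "shift_balanced_configs M N t = cyclic_configs M N \<union> antipodal_configs M N t"
    using shift_balanced_iff[OF assms] configs4_lt
    unfolding shift_balanced_configs_def cyclic_configs_def antipodal_configs_def by blast
  moreover have "cyclic_configs M N \<inter> antipodal_configs M N t = {}"
    using antipodal_pattern_not_cyclic configs4_lt
    unfolding cyclic_configs_def antipodal_configs_def by blast
  moreover have "finite (cyclic_configs M N)" "finite (antipodal_configs M N t)"
    unfolding cyclic_configs_def antipodal_configs_def
    by (rule finite_subset[OF _ finite_configs4], blast)+
  ultimately show ?thesis by (simp add: card_Un_disjoint)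
qed

definition tuple4 :: "'a \<Rightarrow> 'a \<Rightarrow> 'a \<Rightarrow> 'a \<Rightarrow> nat \<Rightarrow> 'a" where
  "tuple4 w x y z = (\<lambda>i\<in>{0..<4}. [w, x, y, z] ! i)"

lemma tuple4_simps [simp]:
  "tuple4 w x y z 0 = w" "tuple4 w x y z 1 = x" "tuple4 w x y z (Suc 0) = x"
  "tuple4 w x y z 2 = y" "tuple4 w x y z 3 = z"
  unfolding tuple4_def by (simp_all add: numeral_eq_Suc)

lemma tuple4_in_PiE: "w \<in> S \<Longrightarrow> x \<in> S \<Longrightarrow> y \<in> S \<Longrightarrow> z \<in> S \<Longrightarrow> tuple4 w x y z \<in> {0..<4} \<rightarrow>\<^sub>E S"
  unfolding tuple4_def by (auto simp: less_Suc_eq numeral_eq_Suc)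

lemma PiE_eq_tuple4:
  assumes "a \<in> {0..<4} \<rightarrow>\<^sub>E S"
  shows "a = tuple4 (a 0) (a 1) (a 2) (a 3)"
proof
  fix i :: nat
  show "a i = tuple4 (a 0) (a 1) (a 2) (a 3) i"
    using PiE_arb[OF assms, of i] by (cases "i < 4") (auto simp: tuple4_def less_Suc_eq numeral_eq_Suc)
qed

lemma card_antipodal_configs:
  assumes t: "0 < t" "t < M"
  shows "card (antipodal_configs M N t) = (if 2 * t = M then M * (M - 2) * (N * (N - 1)) else 0)"
proof (cases "2 * t = M")
  case False
  then have "antipodal_configs M N t = {}"
    unfolding antipodal_configs_def antipodal_pattern_def by auto
  then show ?thesis using False by simp
next
  case True
  let ?s = "\<lambda>x. (t + x) mod M"
  define A where "A = Sigma {..<M} (\<lambda>a0. {..<M} - {a0, ?s a0})"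
  define B where "B = Sigma {..<N} (\<lambda>b0. {..<N} - {b0})"
  define G where "G = (\<lambda>((a0, a1), (b0, b1 :: nat)). (tuple4 a0 a1 (?s a0) (?s a1), tuple4 b0 b1 b0 b1))"
  have "card ({..<M} - {a0, ?s a0}) = M - 2" if "a0 < M" for a0
    using that t add_mod_neq_self[OF t, of a0] by (subst card_Diff_subset) auto
  then have card_A: "card A = M * (M - 2)" unfolding A_def by (simp add: card_SigmaI)
  have card_B: "card B = N * (N - 1)" unfolding B_def by (simp add: card_SigmaI)
  have "inj_on G (A \<times> B)"
    by (rule inj_on_inverseI[where g = "\<lambda>(a, b). ((a 0, a 1), (b 0, b 1))"]) (auto simp: G_def)
  moreover have "G ` (A \<times> B) = antipodal_configs M N t"
  proof
    show "G ` (A \<times> B) \<subseteq> antipodal_configs M N t"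
    proof (rule image_subsetI)
      fix x assume "x \<in> A \<times> B"
      then obtain a0 a1 b0 b1 where x: "x = ((a0, a1), (b0, b1))"
        and "a0 < M" "a1 < M" "b0 < N" "b1 < N" "a1 \<noteq> a0" "a1 \<noteq> ?s a0" "b1 \<noteq> b0"
        unfolding A_def B_def by auto
      with t True show "G x \<in> antipodal_configs M N t"
        unfolding G_def antipodal_configs_def configs4_def antipodal_pattern_def
        by (simp add: tuple4_in_PiE)
    qed
    show "antipodal_configs M N t \<subseteq> G ` (A \<times> B)"
    proof clarify
      fix a b assume "(a, b) \<in> antipodal_configs M N t"
      then have a: "a \<in> {0..<4} \<rightarrow>\<^sub>E {0..<M}" and b: "b \<in> {0..<4} \<rightarrow>\<^sub>E {0..<N}"
        and pattern: "antipodal_pattern M t a b"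
        unfolding antipodal_configs_def configs4_def by auto
      have "(a, b) = G ((a 0, a 1), (b 0, b 1))"
        using PiE_eq_tuple4[OF a] PiE_eq_tuple4[OF b] pattern
        unfolding G_def antipodal_pattern_def by simp
      moreover have "((a 0, a 1), (b 0, b 1)) \<in> A \<times> B"
        using a b pattern unfolding A_def B_def antipodal_pattern_def by auto
      ultimately show "(a, b) \<in> G ` (A \<times> B)" by blast
    qed
  qed
  ultimately have "card (antipodal_configs M N t) = card (A \<times> B)"
    by (metis card_image)
  then show ?thesis using True card_A card_B by (simp add: card_cartesian_product)
qed

definition translate4 :: "nat \<Rightarrow> nat \<Rightarrow> (nat \<Rightarrow> nat) \<Rightarrow> nat \<Rightarrow> nat" where
  "translate4 M u a = (\<lambda>y\<in>{0..<4}. (u + a y) mod M)"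

lemma translate4_apply [simp]: "y < 4 \<Longrightarrow> translate4 M u a y = (u + a y) mod M"
  unfolding translate4_def by simp

lemma translate4_in_PiE: "0 < M \<Longrightarrow> translate4 M u a \<in> {0..<4} \<rightarrow>\<^sub>E {0..<M}"
  unfolding translate4_def by auto

lemma translate4_inverse:
  assumes "u \<le> M" and "a \<in> {0..<4} \<rightarrow>\<^sub>E {0..<M}"
  shows "translate4 M (M - u) (translate4 M u a) = a"
proof
  fix y
  have "(M - u + (u + a y) mod M) mod M = (M - u + (u + a y)) mod M"
    by (simp add: mod_add_right_eq)
  also have "M - u + (u + a y) = M + a y" using assms(1) by simp
  moreover have "a y < M" if "y < 4" using assms(2) that by auto
  ultimately show "translate4 M (M - u) (translate4 M u a) y = a y"
    using assms(2) by (cases "y < 4") (auto simp: translate4_def)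
qed

lemma cond_E_4_2_swap: "cond_E M N 4 2 i a b 1 \<longleftrightarrow> cond_E M N 4 2 i a b 0"
  unfolding cond_E_def sum_mset_lessThan_4 Suc_mod_4 by (auto simp: add_mset_commute)

lemma cond_E_4_2_iff_shift_balanced:
  assumes "i 0 < M"
  shows "cond_E M N 4 2 i a b 0
    \<longleftrightarrow> shift_balanced M ((M - i 0 + i 1) mod M) (translate4 M (i 0) a) b"
proof -
  have "((M - i 0 + i 1) mod M + (i 0 + x) mod M) mod M = (i 1 + x) mod M" for x
  proof -
    have "(M - i 0 + i 1) + (i 0 + x) = (i 1 + x) + M" using assms by simp
    then show ?thesis by (metis mod_add_eq mod_add_self2)
  qed
  then show ?thesis
    unfolding cond_E_def shift_balanced_def pairs4_def rotated_pairs4_def sum_mset_lessThan_4 Suc_mod_4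
    by (simp add: add_mset_commute)
qed

lemma add_mod_cancel:
  fixes c v M :: nat
  assumes "v < M"
  shows "(M - c mod M + (c + v) mod M) mod M = v" and "(c + (M - c mod M + v) mod M) mod M = v"
proof -
  have "c mod M < M" using assms by simp
  then have "M - c mod M + (c mod M + v) = M + v" and "c mod M + (M - c mod M + v) = M + v"
    by linarith+
  moreover have "(M - c mod M + (c + v) mod M) mod M = (M - c mod M + (c mod M + v)) mod M"
    and "(c + (M - c mod M + v) mod M) mod M = (c mod M + (M - c mod M + v)) mod M"
    by (metis mod_add_left_eq mod_add_right_eq)+
  ultimately show "(M - c mod M + (c + v) mod M) mod M = v" and "(c + (M - c mod M + v) mod M) mod M = v"
    using assms by simp_all
qed

lemma bij_betw_add_mod: "bij_betw (\<lambda>v. (c + v) mod M) {..<M} {..<(M::nat)}"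
  by (rule bij_betw_byWitness[where f' = "\<lambda>v. (M - c mod M + v) mod M"])
    (auto simp only: lessThan_iff add_mod_cancel mod_less_divisor gr_implies_not0 neq0_conv)

lemma sum_PiE_2:
  fixes A :: "'a set"
  shows "(\<Sum>i\<in>{0..<2::nat} \<rightarrow>\<^sub>E A. f (i 0) (i 1)) = (\<Sum>u\<in>A. \<Sum>v\<in>A. f u v)"
proof -
  define pair_fun where "pair_fun = (\<lambda>(u :: 'a, v). \<lambda>x\<in>{0..<2::nat}. if x = 0 then u else v)"
  have "bij_betw pair_fun (A \<times> A) ({0..<2} \<rightarrow>\<^sub>E A)"
  proof (rule bij_betw_byWitness[where f' = "\<lambda>i. (i 0, i 1)"])
    show "\<forall>i\<in>{0..<2} \<rightarrow>\<^sub>E A. pair_fun (i 0, i 1) = i"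
    proof
      fix i :: "nat \<Rightarrow> 'a" assume i: "i \<in> {0..<2} \<rightarrow>\<^sub>E A"
      show "pair_fun (i 0, i 1) = i"
      proof
        fix x
        show "pair_fun (i 0, i 1) x = i x"
          using PiE_arb[OF i, of x] by (cases "x < 2") (auto simp: pair_fun_def less_2_cases_iff)
      qed
    qed
  qed (auto simp: pair_fun_def)
  then have "(\<Sum>i\<in>{0..<2::nat} \<rightarrow>\<^sub>E A. f (i 0) (i 1)) = (\<Sum>p\<in>A \<times> A. f (fst p) (snd p))"
    by (subst sum.reindex_bij_betw[symmetric]) (auto simp: pair_fun_def intro!: sum.cong)
  then show ?thesis by (simp add: sum.cartesian_product case_prod_beta)
qed

lemma translate4_configs4:
  assumes "0 < M" and "(a, b) \<in> configs4 M N"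
  shows "(translate4 M u a, b) \<in> configs4 M N"
  using assms translate4_in_PiE[OF assms(1)] unfolding configs4_def by simp

lemma translate4_inverse_configs4:
  assumes "u \<le> M" and "(a, b) \<in> configs4 M N"
  shows "translate4 M (M - u) (translate4 M u a) = a" and "translate4 M u (translate4 M (M - u) a) = a"
  using assms translate4_inverse[of u M] translate4_inverse[of "M - u" M] unfolding configs4_def by simp_all

lemma card_cond_E_configs:
  assumes "i 0 < M"
  shows "card {(a, b) \<in> configs4 M N. cond_E M N 4 2 i a b 0}
    = card (shift_balanced_configs M N ((M - i 0 + i 1) mod M))"
proof (rule bij_betw_same_card)
  have "0 < M" using assms by simp
  show "bij_betw (map_prod (translate4 M (i 0)) id)
      {(a, b) \<in> configs4 M N. cond_E M N 4 2 i a b 0} (shift_balanced_configs M N ((M - i 0 + i 1) mod M))"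
    using cond_E_4_2_iff_shift_balanced[of i M N, OF assms] assms \<open>0 < M\<close>
    by (intro bij_betw_byWitness[where f' = "map_prod (translate4 M (M - i 0)) id"])
      (auto simp: shift_balanced_configs_def translate4_configs4 translate4_inverse_configs4)
qed

lemma card_cond_E_triples:
  "card {(i, a, b). i \<in> {0..<2::nat} \<rightarrow>\<^sub>E {0..<M} \<and> a \<in> {0..<4} \<rightarrow>\<^sub>E {0..<M}
      \<and> b \<in> {0..<4} \<rightarrow>\<^sub>E {0..<N} \<and> (\<forall>x<2. cond_E M N 4 2 i a b x)}
   = M * (\<Sum>t<M. card (shift_balanced_configs M N t))"
proof -
  let ?C = "\<lambda>i. {(a, b) \<in> configs4 M N. cond_E M N 4 2 i a b 0}"
  have "{(i, a, b). i \<in> {0..<2} \<rightarrow>\<^sub>E {0..<M} \<and> a \<in> {0..<4} \<rightarrow>\<^sub>E {0..<M}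
      \<and> b \<in> {0..<4} \<rightarrow>\<^sub>E {0..<N} \<and> (\<forall>x<2. cond_E M N 4 2 i a b x)}
    = Sigma ({0..<2} \<rightarrow>\<^sub>E {0..<M}) ?C"
    using cond_E_4_2_swap by (auto simp: configs4_def less_2_cases_iff)
  moreover have "finite (?C i)" for i
    by (rule finite_subset[OF _ finite_configs4]) blast
  ultimately have "card {(i, a, b). i \<in> {0..<2} \<rightarrow>\<^sub>E {0..<M} \<and> a \<in> {0..<4} \<rightarrow>\<^sub>E {0..<M}
      \<and> b \<in> {0..<4} \<rightarrow>\<^sub>E {0..<N} \<and> (\<forall>x<2. cond_E M N 4 2 i a b x)}
    = (\<Sum>i\<in>{0..<2} \<rightarrow>\<^sub>E {0..<M}. card (?C i))"
    by (simp add: card_SigmaI finite_PiE)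
  also have "\<dots> = (\<Sum>i\<in>{0..<2::nat} \<rightarrow>\<^sub>E {0..<M}. card (shift_balanced_configs M N ((M - i 0 + i 1) mod M)))"
    by (intro sum.cong refl card_cond_E_configs) auto
  also have "\<dots> = (\<Sum>u<M. \<Sum>v<M. card (shift_balanced_configs M N ((M - u + v) mod M)))"
    using sum_PiE_2[of "\<lambda>u v. card (shift_balanced_configs M N ((M - u + v) mod M))" "{0..<M}"]
    by (simp only: atLeast0LessThan)
  also have "\<dots> = (\<Sum>u<M. \<Sum>t<M. card (shift_balanced_configs M N t))"
    by (intro sum.cong refl sum.reindex_bij_betw bij_betw_add_mod)
  finally show ?thesis by simp
qed

lemma sum_if_double_eq:
  fixes M :: nat
  assumes "0 < M"
  shows "(\<Sum>t\<in>{1..<M}. if 2 * t = M then c else 0) = (if even M then c else 0)"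
proof -
  have "(\<Sum>t\<in>{1..<M}. if 2 * t = M then c else 0)
      = (\<Sum>t\<in>{1..<M}. if t = M div 2 then (if even M then c else 0) else 0)"
    by (rule sum.cong) auto
  also have "\<dots> = (if even M then c else 0)"
    using assms by (auto simp: sum.delta elim!: evenE)
  finally show ?thesis .
qed

lemma sum_card_shift_balanced_configs:
  assumes "1 \<le> M"
  shows "(\<Sum>t<M. card (shift_balanced_configs M N t))
    = M ^ 4 * N ^ 4 + (M - 1) * card (cyclic_configs M N) + (if even M then M * (M - 2) * (N * (N - 1)) else 0)"
proof -
  have "(\<Sum>t<M. card (shift_balanced_configs M N t))
      = card (shift_balanced_configs M N 0) + (\<Sum>t\<in>{1..<M}. card (shift_balanced_configs M N t))"
    using assms by (simp add: lessThan_atLeast0 sum.atLeast_Suc_lessThan)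
  also have "(\<Sum>t\<in>{1..<M}. card (shift_balanced_configs M N t))
      = (\<Sum>t\<in>{1..<M}. card (cyclic_configs M N) + (if 2 * t = M then M * (M - 2) * (N * (N - 1)) else 0))"
    by (rule sum.cong) (auto simp: card_shift_balanced_configs card_antipodal_configs)
  also have "\<dots> = (M - 1) * card (cyclic_configs M N) + (if even M then M * (M - 2) * (N * (N - 1)) else 0)"
    using assms by (simp only: sum.distrib sum_if_double_eq sum_constant card_atLeastLessThan) simp
  finally show ?thesis by (simp add: shift_balanced_configs_0 card_configs4)
qed

lemma delta_p_4_eq: "delta_p 4 M N = real (card (cyclic_configs M N)) / (real M * real N) ^ 4"
  unfolding delta_p_def cyclic_configs_def configs4_def pairs4_def rotated_pairs4_def
    sum_mset_lessThan_4 Suc_mod_4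
  by (simp add: add_mset_commute)

theorem theorem4p1:
  fixes M N :: nat
  assumes "M \<ge> 1" and "N \<ge> 1"
  shows "d_pr 4 2 M N = beta42 M N
           + (if even M then 1 else 0) * ((real M - 2) * (real N - 1) / (real M ^ 4 * real N ^ 3))"
proof -
  define D where "D = card (cyclic_configs M N)"
  have d_pr: "d_pr 4 2 M N
      = real (M * (M ^ 4 * N ^ 4 + (M - 1) * D + (if even M then M * (M - 2) * (N * (N - 1)) else 0)))
        / (real M ^ 6 * real N ^ 4)"
    unfolding d_pr_def card_cond_E_triples sum_card_shift_balanced_configs[OF assms(1)] D_def by simp
  have "real M > 0" "real N > 0" "real (M - 1) = real M - 1" "real (N - 1) = real N - 1"
    using assms by (simp_all add: of_nat_diff)
  moreover have "real (M - 2) = real M - 2" if "even M"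
  proof -
    have "2 \<le> M" using assms that by presburger
    then show ?thesis by (simp add: of_nat_diff)
  qed
  ultimately show ?thesis
    unfolding d_pr beta42_def delta_p_4_eq D_def[symmetric]
    by (cases "even M") (simp_all add: field_simps power_eq_if)
qed

end
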